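(* Let $G=(V,E)$ be a finite, undirected, connected graph with unit edge weights and vertex set $V=\{v_1,\dots,v_N\}$, and let $L=D-A$ be its graph Laplacian. Let $\phi_{\lambda_1},\dots,\phi_{\lambda_N}$ be an orthonormal basis of $\mathbb{C}^N$ consisting of eigenvectors of $L$. For $t\ge 0$ let $H_t=e^{-tL}$, let $D_i(t)=\operatorname{diag}(H_t(\cdot,v_i))$, and let $\psi_{ij}(t)=D_i(t)\phi_{\lambda_j}$ for $i,j\in\{1,\dots,N\}$. Then for every $t\ge 0$ the family $\{\psi_{ij}(t)\}_{i,j=1}^N$ is a frame for $\mathbb{C}^N$, and its frame operator $S(t)=\sum_{i,j=1}^N \psi_{ij}(t)\psi_{ij}(t)^*$ is the diagonal matrix $$S(t)=\sum_{i=1}^N D_i(t)^2.$$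
   Context: The graph Laplacian acts by $Lf(v)=\sum_{u\sim v}(f(v)-f(u))$; in matrix form $L=D-A$ with $A$ the adjacency matrix and $D$ the diagonal degree matrix. $\mathbb{C}^N$ is identified with functions on $V$ with the inner product $\langle f,g\rangle=\sum_{v\in V}f(v)\overline{g(v)}$. $H_t(\cdot,v_i)$ denotes the $i$-th column of $H_t$, and $\operatorname{diag}(x)$ is the diagonal matrix with diagonal entries $x$. A family $\{\psi_k\}$ is a frame for $\mathbb{C}^N$ if there exist $0<A\le B$ with $A\|f\|^2\le\sum_k|\langle f,\psi_k\rangle|^2\le B\|f\|^2$ for all $f\in\mathbb{C}^N$. *)

theory Defs
  imports "HOL-Analysis.Analysis"
begin

text \<open>Vertices are the elements of a finite type 'n (so N = CARD('n)); functions
  on V are vectors complex^'n and N x N matrices are complex^'n^'n.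
  A simple undirected graph is given by a symmetric irreflexive edge relation E.\<close>

definition adjacency_matrix :: "('n::finite \<Rightarrow> 'n \<Rightarrow> bool) \<Rightarrow> complex^'n^'n" where
  "adjacency_matrix E = (\<chi> a b. if E a b then 1 else 0)"

definition degree_matrix :: "('n::finite \<Rightarrow> 'n \<Rightarrow> bool) \<Rightarrow> complex^'n^'n" where
  "degree_matrix E = (\<chi> a b. if a = b then of_nat (card {u. E a u}) else 0)"

definition graph_laplacian :: "('n::finite \<Rightarrow> 'n \<Rightarrow> bool) \<Rightarrow> complex^'n^'n" where
  "graph_laplacian E = degree_matrix E - adjacency_matrix E"

definition mat_pow :: "complex^'n::finite^'n \<Rightarrow> nat \<Rightarrow> complex^'n^'n" where
  "mat_pow M k = (((**) M) ^^ k) (mat 1)"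

definition mat_exp :: "complex^'n::finite^'n \<Rightarrow> complex^'n^'n" where
  "mat_exp M = (\<Sum>k. (1 / fact k) *\<^sub>R mat_pow M k)"

definition heat_kernel :: "('n::finite \<Rightarrow> 'n \<Rightarrow> bool) \<Rightarrow> real \<Rightarrow> complex^'n^'n" where
  "heat_kernel E t = mat_exp ((- t) *\<^sub>R graph_laplacian E)"

definition cinner :: "complex^'n::finite \<Rightarrow> complex^'n \<Rightarrow> complex" where
  "cinner f g = (\<Sum>v\<in>UNIV. f $ v * cnj (g $ v))"

definition diag_mat :: "complex^'n::finite \<Rightarrow> complex^'n^'n" where
  "diag_mat x = (\<chi> a b. if a = b then x $ a else 0)"

definition column :: "complex^'n::finite^'n \<Rightarrow> 'n \<Rightarrow> complex^'n" where
  "column M i = (\<chi> v. M $ v $ i)"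

definition outer :: "complex^'n::finite \<Rightarrow> complex^'n^'n" where
  "outer f = (\<chi> a b. f $ a * cnj (f $ b))"

definition is_frame :: "('k \<Rightarrow> complex^'n::finite) \<Rightarrow> 'k set \<Rightarrow> bool" where
  "is_frame \<psi> K \<longleftrightarrow> (\<exists>A B. 0 < A \<and> A \<le> B \<and>
     (\<forall>f. A * (norm f)\<^sup>2 \<le> (\<Sum>k\<in>K. (cmod (cinner f (\<psi> k)))\<^sup>2) \<and>
          (\<Sum>k\<in>K. (cmod (cinner f (\<psi> k)))\<^sup>2) \<le> B * (norm f)\<^sup>2))"

definition frame_operator :: "('k \<Rightarrow> complex^'n::finite) \<Rightarrow> 'k set \<Rightarrow> complex^'n^'n" where
  "frame_operator \<psi> K = (\<Sum>k\<in>K. outer (\<psi> k))"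

end

theory Submission imports Defs begin

text \<open>Expanding H = exp(-tL) in the orthonormal eigenbasis gives
  H(a,b) = sum_j exp(-t lam_j) phi_j(a) conj(phi_j(b)); in particular H is invertible, so no
  row of H vanishes, and H is real because it is the exponential of a real matrix. Since
  <f, D_i phi_j> = <D_i^* f, phi_j>, Parseval's identity in j turns sum_ij |<f, psi_ij>|^2 into
  sum_v |f(v)|^2 w(v) with w(v) = sum_i |H(v,v_i)|^2 > 0, so the minimum and maximum of w are
  frame bounds. The same computation on matrix entries gives S = sum_i D_i D_i^*, which is
  sum_i D_i^2 as H is real.\<close>

lemma orthonormal_resolution_of_identity:
  fixes \<phi> :: "'n::finite \<Rightarrow> complex^'n"
  assumes orthonormal: "\<And>j k. cinner (\<phi> j) (\<phi> k) = (if j = k then 1 else 0)"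
  shows "(\<Sum>j\<in>UNIV. \<phi> j $ a * cnj (\<phi> j $ b)) = (if a = b then 1 else 0)"
proof -
  define U :: "complex^'n^'n" where "U = (\<chi> a j. \<phi> j $ a)"
  define U' :: "complex^'n^'n" where "U' = (\<chi> j a. cnj (\<phi> j $ a))"
  have "(U' ** U) $ j $ k = mat 1 $ j $ k" for j k
    using orthonormal[of k j]
    by (simp add: U_def U'_def matrix_matrix_mult_def cinner_def mat_def mult.commute)
  then have "U' ** U = mat 1" by (simp add: vec_eq_iff)
  then have "U ** U' = mat 1" using matrix_left_right_inverse by blast
  then have "(U ** U') $ a $ b = mat 1 $ a $ b" by simp
  then show ?thesis by (simp add: U_def U'_def matrix_matrix_mult_def mat_def)
qed

lemma diag_mat_mult_vec_component:
  "(diag_mat x *v y) $ a = x $ a * y $ a"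
  unfolding diag_mat_def matrix_vector_mult_def
  by (simp add: if_distrib[of "\<lambda>z. z * _"] cong: if_cong)

lemma diag_mat_mult_diag_mat_component:
  "(diag_mat x ** diag_mat y) $ a $ b = (if a = b then x $ a * y $ a else 0)"
  unfolding diag_mat_def matrix_matrix_mult_def
  by (simp add: if_distrib[of "\<lambda>z. z * _"] cong: if_cong)

lemma sum_UNIV_prod:
  "(\<Sum>k\<in>UNIV. F k) = (\<Sum>i\<in>UNIV. \<Sum>j\<in>UNIV. F (i, j))"
  for F :: "'a::finite \<times> 'b::finite \<Rightarrow> 'c::comm_monoid_add"
  by (simp only: sum.cartesian_product UNIV_Times_UNIV case_prod_eta)

lemma norm_power2_vec:
  fixes f :: "complex^'n::finite"
  shows "(norm f)\<^sup>2 = (\<Sum>v\<in>UNIV. (cmod (f $ v))\<^sup>2)"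
  by (simp add: norm_vec_def L2_set_def sum_nonneg)

lemma eigenvector_scaleR_matrix:
  fixes M :: "complex^'n::finite^'n"
  assumes "M *v x = c *s x"
  shows "(r *\<^sub>R M) *v x = (of_real r * c) *s x"
proof -
  have "((r *\<^sub>R M) *v x) $ a = of_real r * (M *v x) $ a" for a
    by (simp add: matrix_vector_mult_def scaleR_conv_of_real[where 'a=complex]
        sum_distrib_left mult.assoc)
  then show ?thesis using assms by (simp add: vec_eq_iff)
qed

lemma mat_pow_spectral:
  fixes \<phi> :: "'n::finite \<Rightarrow> complex^'n" and M :: "complex^'n^'n"
  assumes orthonormal: "\<And>j k. cinner (\<phi> j) (\<phi> k) = (if j = k then 1 else 0)"
    and eigen: "\<And>j. M *v \<phi> j = \<mu> j *s \<phi> j"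
  shows "mat_pow M k $ a $ b = (\<Sum>j\<in>UNIV. \<mu> j ^ k * (\<phi> j $ a * cnj (\<phi> j $ b)))"
proof (induction k arbitrary: a b)
  case 0
  then show ?case
    using orthonormal_resolution_of_identity[OF orthonormal] by (simp add: mat_pow_def mat_def)
next
  case (Suc k)
  have eigen_row: "(\<Sum>c\<in>UNIV. M $ a $ c * \<phi> j $ c) = \<mu> j * \<phi> j $ a" for j a
    using arg_cong[OF eigen[of j], of "\<lambda>x. x $ a"] by (simp add: matrix_vector_mult_def)
  have "mat_pow M (Suc k) $ a $ b = (\<Sum>c\<in>UNIV. M $ a $ c * mat_pow M k $ c $ b)"
    by (simp add: mat_pow_def matrix_matrix_mult_def)
  also have "\<dots> = (\<Sum>c\<in>UNIV. \<Sum>j\<in>UNIV. \<mu> j ^ k * cnj (\<phi> j $ b) * (M $ a $ c * \<phi> j $ c))"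
    by (simp add: Suc sum_distrib_left mult_ac)
  also have "\<dots> = (\<Sum>j\<in>UNIV. \<mu> j ^ k * cnj (\<phi> j $ b) * (\<Sum>c\<in>UNIV. M $ a $ c * \<phi> j $ c))"
    by (subst sum.swap) (simp add: sum_distrib_left)
  also have "\<dots> = (\<Sum>j\<in>UNIV. \<mu> j ^ Suc k * (\<phi> j $ a * cnj (\<phi> j $ b)))"
    by (simp only: eigen_row) (simp add: mult_ac)
  finally show ?case .
qed

lemma mat_exp_series_sums_spectral:
  fixes \<phi> :: "'n::finite \<Rightarrow> complex^'n" and M :: "complex^'n^'n"
  assumes orthonormal: "\<And>j k. cinner (\<phi> j) (\<phi> k) = (if j = k then 1 else 0)"
    and eigen: "\<And>j. M *v \<phi> j = \<mu> j *s \<phi> j"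
  shows "(\<lambda>k. (1 / fact k) *\<^sub>R mat_pow M k) sums
     (\<chi> a b. \<Sum>j\<in>UNIV. exp (\<mu> j) * (\<phi> j $ a * cnj (\<phi> j $ b)))"
  unfolding sums_def
proof (intro vec_tendstoI)
  fix a b
  have "((1 / fact k) *\<^sub>R mat_pow M k) $ a $ b =
      (\<Sum>j\<in>UNIV. (\<mu> j ^ k /\<^sub>R fact k) * (\<phi> j $ a * cnj (\<phi> j $ b)))" for k
    by (simp add: mat_pow_spectral[OF orthonormal eigen] scaleR_sum_right
        scaleR_conv_of_real[where 'a=complex] sum_distrib_left mult_ac divide_inverse)
  moreover have "(\<lambda>k. \<Sum>j\<in>UNIV. (\<mu> j ^ k /\<^sub>R fact k) * (\<phi> j $ a * cnj (\<phi> j $ b))) sums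
      (\<Sum>j\<in>UNIV. exp (\<mu> j) * (\<phi> j $ a * cnj (\<phi> j $ b)))"
    by (intro sums_sum sums_mult2 exp_converges)
  ultimately show "(\<lambda>n. (\<Sum>k<n. (1 / fact k) *\<^sub>R mat_pow M k) $ a $ b) \<longlonglongrightarrow>
     (\<chi> a b. \<Sum>j\<in>UNIV. exp (\<mu> j) * (\<phi> j $ a * cnj (\<phi> j $ b))) $ a $ b"
    by (simp add: sums_def)
qed

lemma mat_exp_spectral:
  fixes \<phi> :: "'n::finite \<Rightarrow> complex^'n" and M :: "complex^'n^'n"
  assumes orthonormal: "\<And>j k. cinner (\<phi> j) (\<phi> k) = (if j = k then 1 else 0)"
    and eigen: "\<And>j. M *v \<phi> j = \<mu> j *s \<phi> j"
  shows "mat_exp M $ a $ b = (\<Sum>j\<in>UNIV. exp (\<mu> j) * (\<phi> j $ a * cnj (\<phi> j $ b)))"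
  using sums_unique[OF mat_exp_series_sums_spectral[OF orthonormal eigen], symmetric]
  by (simp add: mat_exp_def)

lemma mat_pow_real:
  fixes M :: "complex^'n::finite^'n"
  assumes "\<And>a b. M $ a $ b \<in> \<real>"
  shows "mat_pow M k $ a $ b \<in> \<real>"
proof (induction k arbitrary: a b)
  case 0
  then show ?case by (simp add: mat_pow_def mat_def)
next
  case (Suc k)
  have "mat_pow M (Suc k) = M ** mat_pow M k" by (simp add: mat_pow_def)
  then show ?case using Suc assms by (simp add: matrix_matrix_mult_def)
qed

lemma mat_exp_real:
  fixes M :: "complex^'n::finite^'n"
  assumes real: "\<And>a b. M $ a $ b \<in> \<real>"
    and summable: "summable (\<lambda>k. (1 / fact k) *\<^sub>R mat_pow M k)"
  shows "mat_exp M $ a $ b \<in> \<real>"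
proof (rule real_lim_sequentially)
  show "(\<lambda>n. (\<Sum>k<n. (1 / fact k) *\<^sub>R mat_pow M k) $ a $ b) \<longlonglongrightarrow> mat_exp M $ a $ b"
    using summable unfolding mat_exp_def summable_sums_iff sums_def
    by (intro tendsto_vec_nth)
  show "\<exists>N. \<forall>n\<ge>N. (\<Sum>k<n. (1 / fact k) *\<^sub>R mat_pow M k) $ a $ b \<in> \<real>"
    by (auto simp: scaleR_conv_of_real[where 'a=complex] fact_in_Reals mat_pow_real[OF real])
qed

lemma spectral_matrix_row_nonzero:
  fixes \<phi> :: "'n::finite \<Rightarrow> complex^'n" and H :: "complex^'n^'n"
  assumes orthonormal: "\<And>j k. cinner (\<phi> j) (\<phi> k) = (if j = k then 1 else 0)"
    and spectral: "\<And>a b. H $ a $ b = (\<Sum>j\<in>UNIV. e j * (\<phi> j $ a * cnj (\<phi> j $ b)))"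
    and nonzero: "\<And>j. e j \<noteq> 0"
  shows "\<exists>i. H $ v $ i \<noteq> 0"
proof (rule ccontr)
  assume "\<not> (\<exists>i. H $ v $ i \<noteq> 0)"
  then have row_zero: "H $ v $ i = 0" for i by simp
  have "\<phi> k $ v = 0" for k
  proof -
    have "0 = (\<Sum>i\<in>UNIV. H $ v $ i * \<phi> k $ i)" by (simp add: row_zero)
    also have "\<dots> = (\<Sum>i\<in>UNIV. \<Sum>j\<in>UNIV. e j * \<phi> j $ v * (\<phi> k $ i * cnj (\<phi> j $ i)))"
      by (simp add: spectral sum_distrib_left mult_ac)
    also have "\<dots> = (\<Sum>j\<in>UNIV. e j * \<phi> j $ v * cinner (\<phi> k) (\<phi> j))"
      by (subst sum.swap) (simp add: cinner_def sum_distrib_left)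
    also have "\<dots> = e k * \<phi> k $ v"
      by (simp add: orthonormal if_distrib cong: if_cong)
    finally show ?thesis using nonzero[of k] by simp
  qed
  then show False
    using orthonormal_resolution_of_identity[OF orthonormal, of v v] by simp
qed

lemma heat_kernel_spectral:
  fixes \<phi> :: "'n::finite \<Rightarrow> complex^'n"
  assumes orthonormal: "\<And>j k. cinner (\<phi> j) (\<phi> k) = (if j = k then 1 else 0)"
    and eigen: "\<And>j. graph_laplacian E *v \<phi> j = lam j *s \<phi> j"
  shows "heat_kernel E t $ a $ b
      = (\<Sum>j\<in>UNIV. exp (- of_real t * lam j) * (\<phi> j $ a * cnj (\<phi> j $ b)))"
  unfolding heat_kernel_def
  using mat_exp_spectral[OF orthonormal eigenvector_scaleR_matrix[OF eigen, of "- t"]] by simp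

lemma heat_kernel_real:
  fixes \<phi> :: "'n::finite \<Rightarrow> complex^'n"
  assumes orthonormal: "\<And>j k. cinner (\<phi> j) (\<phi> k) = (if j = k then 1 else 0)"
    and eigen: "\<And>j. graph_laplacian E *v \<phi> j = lam j *s \<phi> j"
  shows "heat_kernel E t $ a $ b \<in> \<real>"
  unfolding heat_kernel_def
proof (rule mat_exp_real)
  show "((- t) *\<^sub>R graph_laplacian E) $ a $ b \<in> \<real>" for a b
    by (simp add: graph_laplacian_def degree_matrix_def adjacency_matrix_def
        scaleR_conv_of_real[where 'a=complex])
  show "summable (\<lambda>k. (1 / fact k) *\<^sub>R mat_pow ((- t) *\<^sub>R graph_laplacian E) k)"
    using mat_exp_series_sums_spectral[OF orthonormal eigenvector_scaleR_matrix[OF eigen]]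
    by (rule sums_summable)
qed

lemma parseval_orthonormal:
  fixes \<phi> :: "'n::finite \<Rightarrow> complex^'n" and g :: "'n \<Rightarrow> complex"
  assumes orthonormal: "\<And>j k. cinner (\<phi> j) (\<phi> k) = (if j = k then 1 else 0)"
  shows "(\<Sum>j\<in>UNIV. (cmod (\<Sum>v\<in>UNIV. g v * cnj (\<phi> j $ v)))\<^sup>2) = (\<Sum>v\<in>UNIV. (cmod (g v))\<^sup>2)"
proof -
  have "complex_of_real (\<Sum>j\<in>UNIV. (cmod (\<Sum>v\<in>UNIV. g v * cnj (\<phi> j $ v)))\<^sup>2)
      = (\<Sum>j\<in>UNIV. (\<Sum>v\<in>UNIV. g v * cnj (\<phi> j $ v)) * cnj (\<Sum>u\<in>UNIV. g u * cnj (\<phi> j $ u)))"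
    by (simp only: of_real_sum complex_norm_square)
  also have "\<dots> = (\<Sum>j\<in>UNIV. \<Sum>u\<in>UNIV. \<Sum>v\<in>UNIV. g v * cnj (g u) * (\<phi> j $ u * cnj (\<phi> j $ v)))"
    by (simp add: sum_distrib_left sum_distrib_right mult_ac)
  also have "\<dots> = (\<Sum>u\<in>UNIV. \<Sum>v\<in>UNIV. \<Sum>j\<in>UNIV. g v * cnj (g u) * (\<phi> j $ u * cnj (\<phi> j $ v)))"
    by (subst sum.swap) (rule sum.cong[OF refl], rule sum.swap)
  also have "\<dots> = (\<Sum>u\<in>UNIV. \<Sum>v\<in>UNIV. g v * cnj (g u) * (\<Sum>j\<in>UNIV. \<phi> j $ u * cnj (\<phi> j $ v)))"
    by (simp only: sum_distrib_left)
  also have "\<dots> = (\<Sum>v\<in>UNIV. g v * cnj (g v))"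
    by (simp add: orthonormal_resolution_of_identity[OF orthonormal] if_distrib cong: if_cong)
  also have "\<dots> = complex_of_real (\<Sum>v\<in>UNIV. (cmod (g v))\<^sup>2)"
    by (simp only: of_real_sum complex_norm_square)
  finally show ?thesis using of_real_eq_iff by blast
qed

lemma is_frame_if_weighted_norm:
  fixes \<psi> :: "'k \<Rightarrow> complex^'n::finite"
  assumes weighted: "\<And>f. (\<Sum>k\<in>K. (cmod (cinner f (\<psi> k)))\<^sup>2) = (\<Sum>v\<in>UNIV. (cmod (f $ v))\<^sup>2 * w v)"
    and pos: "\<And>v. 0 < w v"
  shows "is_frame \<psi> K"
  unfolding is_frame_def
proof (intro exI conjI allI)
  have "Min (range w) \<in> range w" by (rule Min_in) auto
  then show "0 < Min (range w)" using pos by auto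
  show "Min (range w) \<le> Max (range w)" 
    by (rule order_trans[of _ "w undefined"]) simp_all
  fix f :: "complex^'n"
  show "Min (range w) * (norm f)\<^sup>2 \<le> (\<Sum>k\<in>K. (cmod (cinner f (\<psi> k)))\<^sup>2)"
    unfolding weighted norm_power2_vec sum_distrib_left
    by (rule sum_mono) (simp add: mult.commute mult_right_mono)
  show "(\<Sum>k\<in>K. (cmod (cinner f (\<psi> k)))\<^sup>2) \<le> Max (range w) * (norm f)\<^sup>2"
    unfolding weighted norm_power2_vec sum_distrib_left
    by (rule sum_mono) (simp add: mult.commute mult_right_mono)
qed

lemma diag_column_family_weighted_norm:
  fixes \<phi> :: "'n::finite \<Rightarrow> complex^'n" and H :: "complex^'n^'n"
  assumes orthonormal: "\<And>j k. cinner (\<phi> j) (\<phi> k) = (if j = k then 1 else 0)"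
  shows "(\<Sum>k\<in>UNIV. (cmod (cinner f ((\<lambda>(i, j). diag_mat (column H i) *v \<phi> j) k)))\<^sup>2)
       = (\<Sum>v\<in>UNIV. (cmod (f $ v))\<^sup>2 * (\<Sum>i\<in>UNIV. (cmod (H $ v $ i))\<^sup>2))"
proof -
  have inner: "cinner f (diag_mat (column H i) *v \<phi> j)
      = (\<Sum>v\<in>UNIV. (f $ v * cnj (H $ v $ i)) * cnj (\<phi> j $ v))" for i j
    by (simp add: cinner_def diag_mat_mult_vec_component column_def mult.assoc)
  have "(\<Sum>k\<in>UNIV. (cmod (cinner f ((\<lambda>(i, j). diag_mat (column H i) *v \<phi> j) k)))\<^sup>2)
      = (\<Sum>i\<in>UNIV. \<Sum>j\<in>UNIV. (cmod (\<Sum>v\<in>UNIV. (f $ v * cnj (H $ v $ i)) * cnj (\<phi> j $ v)))\<^sup>2)"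
    unfolding sum_UNIV_prod by (simp add: inner)
  also have "\<dots> = (\<Sum>i\<in>UNIV. \<Sum>v\<in>UNIV. (cmod (f $ v * cnj (H $ v $ i)))\<^sup>2)"
    by (simp only: parseval_orthonormal[OF orthonormal])
  also have "\<dots> = (\<Sum>v\<in>UNIV. (cmod (f $ v))\<^sup>2 * (\<Sum>i\<in>UNIV. (cmod (H $ v $ i))\<^sup>2))"
    by (subst sum.swap) (simp add: norm_mult power_mult_distrib sum_distrib_left)
  finally show ?thesis .
qed

lemma is_frame_diag_column_family:
  fixes \<phi> :: "'n::finite \<Rightarrow> complex^'n" and H :: "complex^'n^'n"
  assumes orthonormal: "\<And>j k. cinner (\<phi> j) (\<phi> k) = (if j = k then 1 else 0)"
    and row_nonzero: "\<And>v. \<exists>i. H $ v $ i \<noteq> 0"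
  shows "is_frame (\<lambda>(i, j). diag_mat (column H i) *v \<phi> j) UNIV"
proof (rule is_frame_if_weighted_norm[OF diag_column_family_weighted_norm[OF orthonormal]])
  fix v
  obtain i where "H $ v $ i \<noteq> 0" using row_nonzero by blast
  then have "0 < (cmod (H $ v $ i))\<^sup>2" by simp
  also have "\<dots> \<le> (\<Sum>i\<in>UNIV. (cmod (H $ v $ i))\<^sup>2)" by (rule member_le_sum) auto
  finally show "0 < (\<Sum>i\<in>UNIV. (cmod (H $ v $ i))\<^sup>2)" .
qed

lemma frame_operator_diag_column_family:
  fixes \<phi> :: "'n::finite \<Rightarrow> complex^'n" and H :: "complex^'n^'n"
  assumes orthonormal: "\<And>j k. cinner (\<phi> j) (\<phi> k) = (if j = k then 1 else 0)"
    and real: "\<And>a b. H $ a $ b \<in> \<real>"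
  shows "frame_operator (\<lambda>(i, j). diag_mat (column H i) *v \<phi> j) UNIV
       = (\<Sum>i\<in>UNIV. diag_mat (column H i) ** diag_mat (column H i))"
proof -
  have "frame_operator (\<lambda>(i, j). diag_mat (column H i) *v \<phi> j) UNIV $ a $ b
      = (\<Sum>i\<in>UNIV. diag_mat (column H i) ** diag_mat (column H i)) $ a $ b" for a b
  proof -
    have "frame_operator (\<lambda>(i, j). diag_mat (column H i) *v \<phi> j) UNIV $ a $ b
        = (\<Sum>i\<in>UNIV. H $ a $ i * cnj (H $ b $ i) * (\<Sum>j\<in>UNIV. \<phi> j $ a * cnj (\<phi> j $ b)))"
      unfolding frame_operator_def sum_component sum_UNIV_prod
      by (simp add: outer_def diag_mat_mult_vec_component column_def sum_distrib_left mult_ac)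
    also have "\<dots> = (if a = b then \<Sum>i\<in>UNIV. H $ a $ i * H $ a $ i else 0)"
      using real by (simp add: orthonormal_resolution_of_identity[OF orthonormal] Reals_cnj_iff)
    also have "\<dots> = (\<Sum>i\<in>UNIV. diag_mat (column H i) ** diag_mat (column H i)) $ a $ b"
      by (simp add: sum_component diag_mat_mult_diag_mat_component column_def)
    finally show ?thesis .
  qed
  then show ?thesis by (simp add: vec_eq_iff)
qed

theorem theorem3p1:
  fixes E :: "'n::finite \<Rightarrow> 'n \<Rightarrow> bool"
    and \<phi> :: "'n \<Rightarrow> complex^'n"
    and t :: real
  assumes sym: "\<And>u v. E u v \<Longrightarrow> E v u"
    and irrefl: "\<And>v. \<not> E v v"
    and connected: "\<And>u v. E\<^sup>*\<^sup>* u v"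
    and orthonormal: "\<And>j k. cinner (\<phi> j) (\<phi> k) = (if j = k then 1 else 0)"
    and eigen: "\<And>j. \<exists>c. graph_laplacian E *v \<phi> j = c *s \<phi> j"
    and t_nonneg: "0 \<le> t"
  shows "is_frame (\<lambda>(i, j). diag_mat (column (heat_kernel E t) i) *v \<phi> j) UNIV
       \<and> frame_operator (\<lambda>(i, j). diag_mat (column (heat_kernel E t) i) *v \<phi> j) UNIV
         = (\<Sum>i\<in>UNIV. diag_mat (column (heat_kernel E t) i) ** diag_mat (column (heat_kernel E t) i))"
proof
  obtain lam where eigenvalue: "\<And>j. graph_laplacian E *v \<phi> j = lam j *s \<phi> j"
    using eigen by metis
  have "\<exists>i. heat_kernel E t $ v $ i \<noteq> 0" for v
    by (rule spectral_matrix_row_nonzero[OF orthonormal heat_kernel_spectral[OF orthonormal eigenvalue]])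
      simp
  then show "is_frame (\<lambda>(i, j). diag_mat (column (heat_kernel E t) i) *v \<phi> j) UNIV"
    by (rule is_frame_diag_column_family[OF orthonormal])
  show "frame_operator (\<lambda>(i, j). diag_mat (column (heat_kernel E t) i) *v \<phi> j) UNIV
      = (\<Sum>i\<in>UNIV. diag_mat (column (heat_kernel E t) i) ** diag_mat (column (heat_kernel E t) i))"
    by (rule frame_operator_diag_column_family[OF orthonormal heat_kernel_real[OF orthonormal eigenvalue]])
qed

end
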